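(* Let $f$ be a Boolean function over $X$ and $T$ a vtree over $X$. Then every TDD respecting $T$ and computing $f$ has, for every node $t$ of $T$, at least $S_t$ $t$-nodes, where $S_t$ is the number of distinct non-trivial $X_t$-subfunctions of $f$.
   Context: For $Y\subseteq X$ and $\tau\in 2^Y$, $f[\tau]$ is the Boolean function over $X\setminus Y$ mapping $\sigma$ to $f(\sigma\times\tau)$. The $Y$-subfunctions of $f$ are the functions $f[\tau]$ for $\tau\in 2^Y$ (distinct functions counted once); a subfunction is non-trivial if it has at least one model. A vtree over $X$ is a rooted tree whose internal nodes have exactly two ordered children and whose leaves are labeled bijectively by $X$; $X_t$ is the set of variables below node $t$. An nTDD $C=(N,E)$ respecting $T$ has nodes $N=\biguplus_t N_t$ ($t$-nodes); leaf $t$-nodes (leaf labeled $x$) carry a label in $\{x,\neg x,1,0\}$ and compute that literal/constant; an internal $t$-node $g$ with children $t_1,t_2$ has inputs $E(g)\subseteq N_{t_1}\times N_{t_2}$ and computes $f_g=\bigvee_{(g_1,g_2)\in E(g)}(f_{g_1}\wedge f_{g_2})$ over $X_t$; the distinguished root-node $\mathrm{out}$ gives $f_C=f_{\mathrm{out}}$. A TDD is an nTDD such that for every leaf $t$ labeled $x$, $N_t$ has at most one node labeled $x$, at most one labeled $\neg x$, at most one labeled $1$, and if one is labeled $1$ all others are labeled $0$; and for every internal $t$, distinct $t$-nodes have disjoint input sets. *)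

theory Defs
  imports Main
begin

(* Assignments are total maps 'x => bool; a Boolean function over X is a map
   on assignments that only depends on the values of the variables in X. *)
type_synonym 'x assignment = "'x \<Rightarrow> bool"
type_synonym 'x boolfun = "'x assignment \<Rightarrow> bool"

definition depends_only :: "'x boolfun \<Rightarrow> 'x set \<Rightarrow> bool" where
  "depends_only f X \<longleftrightarrow> (\<forall>\<sigma> \<sigma>'. (\<forall>x\<in>X. \<sigma> x = \<sigma>' x) \<longrightarrow> f \<sigma> = f \<sigma>')"

definition combine :: "'x set \<Rightarrow> 'x assignment \<Rightarrow> 'x assignment \<Rightarrow> 'x assignment" where
  "combine Y \<sigma> \<tau> = (\<lambda>x. if x \<in> Y then \<tau> x else \<sigma> x)"

definition subfun :: "'x boolfun \<Rightarrow> 'x set \<Rightarrow> 'x assignment \<Rightarrow> 'x boolfun" where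
  "subfun f Y \<tau> = (\<lambda>\<sigma>. f (combine Y \<sigma> \<tau>))"

definition subfunctions :: "'x boolfun \<Rightarrow> 'x set \<Rightarrow> 'x boolfun set" where
  "subfunctions f Y = {g. \<exists>\<tau>. g = subfun f Y \<tau>}"

definition nontrivial_subfunctions :: "'x boolfun \<Rightarrow> 'x set \<Rightarrow> 'x boolfun set" where
  "nontrivial_subfunctions f Y = {g \<in> subfunctions f Y. \<exists>\<sigma>. g \<sigma>}"

datatype 'x vtree = Leaf 'x | Node "'x vtree" "'x vtree"

fun leaves_list :: "'x vtree \<Rightarrow> 'x list" where
  "leaves_list (Leaf x) = [x]"
| "leaves_list (Node l r) = leaves_list l @ leaves_list r"

definition vars :: "'x vtree \<Rightarrow> 'x set" where
  "vars t = set (leaves_list t)"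

(* the nodes of a vtree, identified with the subtrees rooted at them
   (distinct nodes give distinct subtrees since leaf labels are distinct) *)
fun subtrees :: "'x vtree \<Rightarrow> 'x vtree set" where
  "subtrees (Leaf x) = {Leaf x}"
| "subtrees (Node l r) = insert (Node l r) (subtrees l \<union> subtrees r)"

definition vtree_over :: "'x set \<Rightarrow> 'x vtree \<Rightarrow> bool" where
  "vtree_over X T \<longleftrightarrow> distinct (leaves_list T) \<and> set (leaves_list T) = X"

(* labels of leaf nodes: Pos = x, Neg = \<not>x, One = 1, Zero = 0,
   where x is the variable labelling the vtree leaf *)
datatype lit = Pos | Neg | One | Zero

(* A circuit is given by: node set N, the vtree node vt g of which g is a
   t-node, leaf labels lab, inputs E, and the output node out. *)
definition nTDD ::
  "'x vtree \<Rightarrow> 'n set \<Rightarrow> ('n \<Rightarrow> 'x vtree) \<Rightarrow> ('n \<Rightarrow> lit) \<Rightarrow> ('n \<Rightarrow> ('n \<times> 'n) set) \<Rightarrow> 'n \<Rightarrow> bool"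
where
  "nTDD T N vt lab E out \<longleftrightarrow>
     finite N \<and>
     (\<forall>g\<in>N. vt g \<in> subtrees T) \<and>
     (\<forall>g\<in>N. \<forall>t1 t2. vt g = Node t1 t2 \<longrightarrow>
         E g \<subseteq> {(g1, g2). g1 \<in> N \<and> g2 \<in> N \<and> vt g1 = t1 \<and> vt g2 = t2}) \<and>
     out \<in> N \<and> vt out = T"

fun sem :: "('n \<Rightarrow> lit) \<Rightarrow> ('n \<Rightarrow> ('n \<times> 'n) set) \<Rightarrow> 'x vtree \<Rightarrow> 'n \<Rightarrow> 'x boolfun" where
  "sem lab E (Leaf x) g \<sigma> =
     (case lab g of Pos \<Rightarrow> \<sigma> x | Neg \<Rightarrow> \<not> \<sigma> x | One \<Rightarrow> True | Zero \<Rightarrow> False)"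
| "sem lab E (Node t1 t2) g \<sigma> =
     (\<exists>(g1, g2) \<in> E g. sem lab E t1 g1 \<sigma> \<and> sem lab E t2 g2 \<sigma>)"

definition node_fun :: "('n \<Rightarrow> 'x vtree) \<Rightarrow> ('n \<Rightarrow> lit) \<Rightarrow> ('n \<Rightarrow> ('n \<times> 'n) set) \<Rightarrow> 'n \<Rightarrow> 'x boolfun" where
  "node_fun vt lab E g = sem lab E (vt g) g"

definition tnodes :: "'n set \<Rightarrow> ('n \<Rightarrow> 'x vtree) \<Rightarrow> 'x vtree \<Rightarrow> 'n set" where
  "tnodes N vt t = {g \<in> N. vt g = t}"

definition TDD ::
  "'x vtree \<Rightarrow> 'n set \<Rightarrow> ('n \<Rightarrow> 'x vtree) \<Rightarrow> ('n \<Rightarrow> lit) \<Rightarrow> ('n \<Rightarrow> ('n \<times> 'n) set) \<Rightarrow> 'n \<Rightarrow> bool"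
where
  "TDD T N vt lab E out \<longleftrightarrow>
     nTDD T N vt lab E out \<and>
     (\<forall>x. Leaf x \<in> subtrees T \<longrightarrow>
        (\<forall>l \<in> {Pos, Neg, One}. card {g \<in> tnodes N vt (Leaf x). lab g = l} \<le> 1) \<and>
        (\<forall>g \<in> tnodes N vt (Leaf x). lab g = One \<longrightarrow>
           (\<forall>h \<in> tnodes N vt (Leaf x). h \<noteq> g \<longrightarrow> lab h = Zero))) \<and>
     (\<forall>t1 t2. Node t1 t2 \<in> subtrees T \<longrightarrow>
        (\<forall>g \<in> tnodes N vt (Node t1 t2). \<forall>h \<in> tnodes N vt (Node t1 t2).
           g \<noteq> h \<longrightarrow> E g \<inter> E h = {}))"

end

theory Submission
  imports Defs
begin

(* Fix a vtree node t. Unfolding f = f_out down the vtree writes f as a disjunction, over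
   the t-nodes g, of f_g \<and> h_g, where the context h_g reads only variables outside X_t.
   In a TDD at most one t-node accepts a given assignment: leaf labels are unique, and
   distinct internal t-nodes have disjoint input sets. So for a non-trivial subfunction
   f[\<tau>] the unique t-node g accepting \<tau> gives f[\<tau>] = h_g, and the non-trivial
   X_t-subfunctions are among the at most |N_t| contexts h_g. *)

lemma vars_Leaf [simp]: "vars (Leaf x) = {x}"
  by (simp add: vars_def)

lemma vars_Node [simp]: "vars (Node l r) = vars l \<union> vars r"
  by (simp add: vars_def)

lemma self_in_subtrees: "t \<in> subtrees t"
  by (cases t) auto

lemma subtrees_mono: "s \<in> subtrees t \<Longrightarrow> subtrees s \<subseteq> subtrees t"
  by (induction t) auto

lemma depends_only_mono: "depends_only f Y \<Longrightarrow> Y \<subseteq> Z \<Longrightarrow> depends_only f Z"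
  by (auto simp: depends_only_def)

lemma depends_only_sem: "depends_only (sem lab E t g) (vars t)"
  unfolding depends_only_def
proof (intro allI impI)
  show "\<forall>x\<in>vars t. \<sigma> x = \<sigma>' x \<Longrightarrow> sem lab E t g \<sigma> = sem lab E t g \<sigma>'" for \<sigma> \<sigma>'
    by (induction t arbitrary: g) (auto split: lit.splits)
qed

lemma sem_Leaf_iff:
  "sem lab E (Leaf x) g \<sigma> \<longleftrightarrow> lab g = One \<or> lab g = (if \<sigma> x then Pos else Neg)"
  by (cases "lab g") auto

lemma nTDD_input_tnodes:
  assumes "nTDD T N vt lab E out" "g \<in> tnodes N vt (Node l r)" "(g1, g2) \<in> E g"
  shows "g1 \<in> tnodes N vt l" "g2 \<in> tnodes N vt r"
  using assms unfolding nTDD_def tnodes_def by blast+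

lemma TDD_leaf_tnode_unique:
  assumes tdd: "TDD T N vt lab E out" and x: "Leaf x \<in> subtrees T"
    and g: "g \<in> tnodes N vt (Leaf x)" and h: "h \<in> tnodes N vt (Leaf x)"
    and "sem lab E (Leaf x) g \<sigma>" "sem lab E (Leaf x) h \<sigma>"
  shows "g = h"
proof (rule ccontr)
  assume "g \<noteq> h"
  have card_le: "\<forall>l \<in> {Pos, Neg, One}. card {g' \<in> tnodes N vt (Leaf x). lab g' = l} \<le> 1"
    and one_excl: "\<forall>g' \<in> tnodes N vt (Leaf x). lab g' = One \<longrightarrow>
                     (\<forall>h' \<in> tnodes N vt (Leaf x). h' \<noteq> g' \<longrightarrow> lab h' = Zero)"
    using tdd x unfolding TDD_def by blast+
  define l where "l = (if \<sigma> x then Pos else Neg)"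
  have not_One: "lab g' \<noteq> One"
    if "g' \<in> tnodes N vt (Leaf x)" "h' \<in> tnodes N vt (Leaf x)" "h' \<noteq> g'"
      and "sem lab E (Leaf x) h' \<sigma>" for g' h'
  proof
    assume "lab g' = One"
    with one_excl that(1-3) have "lab h' = Zero"
      by blast
    with that(4) show False
      by simp
  qed
  have "lab g \<noteq> One" "lab h \<noteq> One"
    using not_One[OF g h] not_One[OF h g] \<open>g \<noteq> h\<close> assms(5,6) by auto
  then have "lab g = l" "lab h = l"
    using assms(5,6) unfolding sem_Leaf_iff l_def by simp_all
  moreover have "card {g' \<in> tnodes N vt (Leaf x). lab g' = l} \<le> Suc 0"
    using card_le by (simp add: l_def)
  moreover have "finite {g' \<in> tnodes N vt (Leaf x). lab g' = l}"
    using tdd by (simp add: TDD_def nTDD_def tnodes_def)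
  ultimately show False
    using g h \<open>g \<noteq> h\<close> card_le_Suc0_iff_eq by blast
qed

lemma TDD_tnode_unique:
  assumes tdd: "TDD T N vt lab E out"
  shows "t \<in> subtrees T \<Longrightarrow> g \<in> tnodes N vt t \<Longrightarrow> h \<in> tnodes N vt t
    \<Longrightarrow> sem lab E t g \<sigma> \<Longrightarrow> sem lab E t h \<sigma> \<Longrightarrow> g = h"
proof (induction t arbitrary: g h)
  case (Leaf x)
  then show ?case using TDD_leaf_tnode_unique[OF tdd] by blast
next
  case (Node l r)
  have nTDD: "nTDD T N vt lab E out"
    using tdd by (simp add: TDD_def)
  have lr: "l \<in> subtrees T" "r \<in> subtrees T"
    using subtrees_mono[OF Node.prems(1)] self_in_subtrees by auto
  obtain g1 g2 where g: "(g1, g2) \<in> E g" "sem lab E l g1 \<sigma>" "sem lab E r g2 \<sigma>"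
    using Node.prems(4) by auto
  obtain h1 h2 where h: "(h1, h2) \<in> E h" "sem lab E l h1 \<sigma>" "sem lab E r h2 \<sigma>"
    using Node.prems(5) by auto
  have "g1 = h1" "g2 = h2"
    using Node.IH lr g h nTDD_input_tnodes[OF nTDD Node.prems(2) g(1)]
      nTDD_input_tnodes[OF nTDD Node.prems(3) h(1)] by blast+
  with g h have "E g \<inter> E h \<noteq> {}"
    by auto
  then show ?case
    using tdd Node.prems(1-3) unfolding TDD_def by blast
qed

definition is_context ::
  "'x boolfun \<Rightarrow> 'n set \<Rightarrow> ('n \<Rightarrow> 'x vtree) \<Rightarrow> ('n \<Rightarrow> lit) \<Rightarrow> ('n \<Rightarrow> ('n \<times> 'n) set)
    \<Rightarrow> 'x vtree \<Rightarrow> ('n \<Rightarrow> 'x boolfun) \<Rightarrow> bool"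
where
  "is_context f N vt lab E t h \<longleftrightarrow>
     (\<forall>\<sigma>. f \<sigma> = (\<exists>g \<in> tnodes N vt t. sem lab E t g \<sigma> \<and> h g \<sigma>)) \<and>
     (\<forall>g. depends_only (h g) (- vars t))"

lemma is_context_root:
  assumes "nTDD T N vt lab E out"
  shows "is_context (node_fun vt lab E out) N vt lab E T (\<lambda>g _. g = out)"
  using assms by (auto simp: is_context_def depends_only_def nTDD_def tnodes_def node_fun_def)

lemma depends_only_context_step:
  fixes q :: "'c \<Rightarrow> 'x boolfun" and h :: "'n \<Rightarrow> 'x boolfun"
  assumes "\<And>c. depends_only (q c) Y" and "\<And>g. depends_only (h g) Y"
  shows "depends_only (\<lambda>\<sigma>. \<exists>g \<in> M. \<exists>c. P g c \<and> q c \<sigma> \<and> h g \<sigma>) Y"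
  unfolding depends_only_def
proof (intro allI impI)
  fix \<sigma> \<sigma>' :: "'x assignment"
  assume "\<forall>x\<in>Y. \<sigma> x = \<sigma>' x"
  then have "q c \<sigma> = q c \<sigma>'" "h g \<sigma> = h g \<sigma>'" for c g
    using assms unfolding depends_only_def by blast+
  then show "(\<exists>g \<in> M. \<exists>c. P g c \<and> q c \<sigma> \<and> h g \<sigma>) = (\<exists>g \<in> M. \<exists>c. P g c \<and> q c \<sigma>' \<and> h g \<sigma>')"
    by simp
qed

lemma is_context_children:
  assumes nTDD: "nTDD T N vt lab E out"
    and disj: "vars l \<inter> vars r = {}"
    and ctx: "is_context f N vt lab E (Node l r) h"
  shows "is_context f N vt lab E l
           (\<lambda>g1 \<sigma>. \<exists>g \<in> tnodes N vt (Node l r). \<exists>g2. (g1, g2) \<in> E g \<and> sem lab E r g2 \<sigma> \<and> h g \<sigma>)"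
    and "is_context f N vt lab E r
           (\<lambda>g2 \<sigma>. \<exists>g \<in> tnodes N vt (Node l r). \<exists>g1. (g1, g2) \<in> E g \<and> sem lab E l g1 \<sigma> \<and> h g \<sigma>)"
proof -
  have f: "f \<sigma> = (\<exists>g \<in> tnodes N vt (Node l r). \<exists>(g1, g2) \<in> E g.
                      sem lab E l g1 \<sigma> \<and> sem lab E r g2 \<sigma> \<and> h g \<sigma>)" for \<sigma>
    using ctx by (auto simp: is_context_def)
  have h: "depends_only (h g) (- vars l)" "depends_only (h g) (- vars r)" for g
    using ctx by (auto simp: is_context_def elim: depends_only_mono)
  have sem: "depends_only (sem lab E l g) (- vars r)" "depends_only (sem lab E r g) (- vars l)" for g
    using disj by (auto intro: depends_only_mono[OF depends_only_sem])
  note inputs = nTDD_input_tnodes[OF nTDD]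
  show "is_context f N vt lab E l
           (\<lambda>g1 \<sigma>. \<exists>g \<in> tnodes N vt (Node l r). \<exists>g2. (g1, g2) \<in> E g \<and> sem lab E r g2 \<sigma> \<and> h g \<sigma>)"
    unfolding is_context_def
  proof (intro conjI allI)
    show "f \<sigma> = (\<exists>g1\<in>tnodes N vt l. sem lab E l g1 \<sigma> \<and>
            (\<exists>g \<in> tnodes N vt (Node l r). \<exists>g2. (g1, g2) \<in> E g \<and> sem lab E r g2 \<sigma> \<and> h g \<sigma>))" for \<sigma>
      unfolding f using inputs by blast
  qed (intro depends_only_context_step sem h)
  show "is_context f N vt lab E r
           (\<lambda>g2 \<sigma>. \<exists>g \<in> tnodes N vt (Node l r). \<exists>g1. (g1, g2) \<in> E g \<and> sem lab E l g1 \<sigma> \<and> h g \<sigma>)"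
    unfolding is_context_def
  proof (intro conjI allI)
    show "f \<sigma> = (\<exists>g2\<in>tnodes N vt r. sem lab E r g2 \<sigma> \<and>
            (\<exists>g \<in> tnodes N vt (Node l r). \<exists>g1. (g1, g2) \<in> E g \<and> sem lab E l g1 \<sigma> \<and> h g \<sigma>))" for \<sigma>
      unfolding f using inputs by blast
  qed (intro depends_only_context_step sem h)
qed

lemma is_context_subtree:
  assumes nTDD: "nTDD T N vt lab E out"
  shows "distinct (leaves_list s) \<Longrightarrow> is_context f N vt lab E s h \<Longrightarrow> t \<in> subtrees s
    \<Longrightarrow> \<exists>h'. is_context f N vt lab E t h'"
proof (induction s arbitrary: h t)
  case (Leaf x)
  then show ?case by auto
next
  case (Node l r)
  then have "vars l \<inter> vars r = {}"
    by (simp add: vars_def)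
  from is_context_children[OF nTDD this Node.prems(2)] show ?case
    using Node.prems Node.IH by auto
qed

lemma subfun_context:
  assumes ctx: "is_context f N vt lab E t h"
  shows "subfun f (vars t) \<tau> \<sigma> = (\<exists>g \<in> tnodes N vt t. sem lab E t g \<tau> \<and> h g \<sigma>)"
proof -
  have "sem lab E t g (combine (vars t) \<sigma> \<tau>) = sem lab E t g \<tau>" for g
    by (rule depends_only_sem[unfolded depends_only_def, rule_format]) (simp add: combine_def)
  moreover have "h g (combine (vars t) \<sigma> \<tau>) = h g \<sigma>" for g
    using ctx unfolding is_context_def depends_only_def by (simp add: combine_def)
  moreover have "f (combine (vars t) \<sigma> \<tau>) =
      (\<exists>g \<in> tnodes N vt t. sem lab E t g (combine (vars t) \<sigma> \<tau>) \<and> h g (combine (vars t) \<sigma> \<tau>))"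
    using ctx unfolding is_context_def by blast
  ultimately show ?thesis
    by (simp add: subfun_def)
qed

lemma nontrivial_subfunctions_subset_contexts:
  assumes ctx: "is_context f N vt lab E t h"
    and unique: "\<And>g g' \<sigma>. g \<in> tnodes N vt t \<Longrightarrow> g' \<in> tnodes N vt t
      \<Longrightarrow> sem lab E t g \<sigma> \<Longrightarrow> sem lab E t g' \<sigma> \<Longrightarrow> g = g'"
  shows "nontrivial_subfunctions f (vars t) \<subseteq> h ` tnodes N vt t"
proof
  fix \<phi> assume "\<phi> \<in> nontrivial_subfunctions f (vars t)"
  then obtain \<tau> \<sigma> where \<phi>: "\<phi> = subfun f (vars t) \<tau>" and "\<phi> \<sigma>"
    by (auto simp: nontrivial_subfunctions_def subfunctions_def)
  then obtain g where g: "g \<in> tnodes N vt t" "sem lab E t g \<tau>"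
    using subfun_context[OF ctx] by blast
  have "\<phi> = h g"
    using subfun_context[OF ctx] unique[OF g(1) _ g(2)] g unfolding \<phi> by blast
  with g show "\<phi> \<in> h ` tnodes N vt t"
    by blast
qed

theorem theorem7:
  fixes X :: "'x set" and f :: "'x boolfun" and T :: "'x vtree"
    and N :: "'n set" and vt :: "'n \<Rightarrow> 'x vtree" and lab :: "'n \<Rightarrow> lit"
    and E :: "'n \<Rightarrow> ('n \<times> 'n) set" and out :: 'n
  assumes "depends_only f X"
    and "vtree_over X T"
    and "TDD T N vt lab E out"
    and "node_fun vt lab E out = f"
  shows "\<forall>t \<in> subtrees T.
           card (nontrivial_subfunctions f (vars t)) \<le> card (tnodes N vt t)"
proof
  fix t assume t: "t \<in> subtrees T"
  have nTDD: "nTDD T N vt lab E out" and "finite N"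
    using assms(3) by (auto simp: TDD_def nTDD_def)
  then have fin: "finite (tnodes N vt t)"
    by (simp add: tnodes_def)
  obtain h where ctx: "is_context f N vt lab E t h"
    using is_context_subtree[OF nTDD _ is_context_root[OF nTDD] t] assms(2,4)
    by (auto simp: vtree_over_def)
  have "card (nontrivial_subfunctions f (vars t)) \<le> card (h ` tnodes N vt t)"
    using nontrivial_subfunctions_subset_contexts[OF ctx TDD_tnode_unique[OF assms(3) t]]
    by (intro card_mono finite_imageI fin)
  also have "\<dots> \<le> card (tnodes N vt t)"
    using card_image_le[OF fin] .
  finally show "card (nontrivial_subfunctions f (vars t)) \<le> card (tnodes N vt t)" .
qed

end
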